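(* If $C\subseteq\mathbb{R}$ is infinite and $|\mathbb{R}\setminus C|=\mathfrak{c}$, then there is a two-point selection $f$ on $\mathbb{R}$ such that $C$ is neither open nor closed in the topology $\tau_f$.
   Context: $\mathfrak{c}=|\mathbb{R}|$. A two-point selection on $\mathbb{R}$ is a function $f$ from the set of two-element subsets of $\mathbb{R}$ to $\mathbb{R}$ with $f(F)\in F$. Write $r<_f s$ if $f(\{r,s\})=r$ ($r\ne s$), $(\leftarrow,r)_f=\{x: x<_f r\}$, $(r,\rightarrow)_f=\{x: r<_f x\}$. The topology $\tau_f$ on $\mathbb{R}$ is generated (as a subbase) by all sets $(\leftarrow,r)_f$, $(r,\rightarrow)_f$, $r\in\mathbb{R}$. *)

theory Defs
  imports "HOL-Analysis.Analysis" "HOL-Library.Equipollence"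
begin

text \<open>A two-point selection on the reals: a function on sets whose value on every
  two-element set lies in that set (its values on other sets are irrelevant).\<close>
definition two_point_selection :: "(real set \<Rightarrow> real) \<Rightarrow> bool" where
  "two_point_selection f \<longleftrightarrow> (\<forall>r s. r \<noteq> s \<longrightarrow> f {r, s} \<in> {r, s})"

definition sel_less :: "(real set \<Rightarrow> real) \<Rightarrow> real \<Rightarrow> real \<Rightarrow> bool" where
  "sel_less f r s \<longleftrightarrow> r \<noteq> s \<and> f {r, s} = r"

definition sel_left_ray :: "(real set \<Rightarrow> real) \<Rightarrow> real \<Rightarrow> real set" where
  "sel_left_ray f r = {x. sel_less f x r}"

definition sel_right_ray :: "(real set \<Rightarrow> real) \<Rightarrow> real \<Rightarrow> real set" where
  "sel_right_ray f r = {x. sel_less f r x}"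

definition sel_topology :: "(real set \<Rightarrow> real) \<Rightarrow> real topology" where
  "sel_topology f = topology_generated_by
     ((\<lambda>r. sel_left_ray f r) ` UNIV \<union> (\<lambda>r. sel_right_ray f r) ` UNIV)"

end

theory Submission
  imports Defs
begin

text \<open>Selecting from each pair the point with the smaller value of an injective map
  \<open>g :: real \<Rightarrow> real\<close> makes every selection ray the preimage of an open ray, so
  \<open>\<tau>\<^sub>f\<close>-open sets are preimages under \<open>g\<close> of open sets. Hence a point of an open set
  is not a \<open>g\<close>-limit of points outside it. It remains to choose \<open>g\<close> so that some
  \<open>p \<in> C\<close> is a \<open>g\<close>-limit of points outside \<open>C\<close> and some \<open>q \<notin> C\<close> is a \<open>g\<close>-limit of
  points of \<open>C\<close>; for this, only the infinitude of \<open>C\<close> and of its complement is needed.\<close>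

lemma arg_min_on_doubleton:
  fixes g :: "real \<Rightarrow> 'a::linorder"
  assumes "inj g" "g r \<le> g s"
  shows "arg_min_on g {r, s} = r"
  unfolding arg_min_on_def
  by (rule arg_min_inj_eq) (use assms in \<open>auto intro: inj_on_subset\<close>)

lemma sel_less_arg_min_on:
  fixes g :: "real \<Rightarrow> 'a::linorder"
  assumes "inj g"
  shows "sel_less (arg_min_on g) x y \<longleftrightarrow> g x < g y"
proof (cases "g x < g y")
  case True
  then show ?thesis
    using arg_min_on_doubleton[OF assms] by (auto simp: sel_less_def)
next
  case False
  then have "arg_min_on g {x, y} = y"
    using arg_min_on_doubleton[OF assms, of y x] by (simp add: insert_commute)
  then show ?thesis
    using False by (auto simp: sel_less_def)
qed

lemma two_point_selection_arg_min_on: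
  fixes g :: "real \<Rightarrow> 'a::linorder"
  assumes "inj g"
  shows "two_point_selection (arg_min_on g)"
  unfolding two_point_selection_def
  using arg_min_on_doubleton[OF assms] by (metis insert_commute insertI1 linear)

lemma topspace_sel_topology_arg_min_on:
  fixes g :: "real \<Rightarrow> 'a::linorder"
  assumes "inj g"
  shows "topspace (sel_topology (arg_min_on g)) = UNIV"
proof -
  have "x \<in> sel_left_ray (arg_min_on g) (x + 1) \<union> sel_right_ray (arg_min_on g) (x + 1)" for x
    using injD[OF assms, of x "x + 1"] linorder_neqE[of "g x" "g (x + 1)"]
    by (auto simp: sel_left_ray_def sel_right_ray_def sel_less_arg_min_on[OF assms])
  then show ?thesis
    by (auto simp: sel_topology_def)
qed

lemma openin_pullback_topology_if_openin_sel_topology: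
  fixes g :: "real \<Rightarrow> 'a::linorder_topology"
  assumes "inj g" "openin (sel_topology (arg_min_on g)) U"
  shows "openin (pullback_topology UNIV g euclidean) U"
  using assms(2) unfolding sel_topology_def openin_topology_generated_by_iff
proof (rule generate_topology_on_coarsest[rotated 2])
  fix R
  assume "R \<in> range (sel_left_ray (arg_min_on g)) \<union> range (sel_right_ray (arg_min_on g))"
  then obtain r where "R = g -` {..<g r} \<or> R = g -` {g r<..}"
    by (auto simp: sel_left_ray_def sel_right_ray_def sel_less_arg_min_on[OF assms(1)])
  then show "openin (pullback_topology UNIV g euclidean) R"
    by (metis openin_pullback_topology open_openin open_lessThan open_greaterThan Int_UNIV_right)
qed (rule istopology_openin)

lemma eventually_in_openin_sel_topology:
  fixes g :: "real \<Rightarrow> 'a::linorder_topology"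
  assumes "inj g" "openin (sel_topology (arg_min_on g)) U" "p \<in> U"
    and "(\<lambda>n. g (x n)) \<longlonglongrightarrow> g p"
  shows "eventually (\<lambda>n. x n \<in> U) sequentially"
proof -
  obtain V where "open V" "U = g -` V"
    using openin_pullback_topology_if_openin_sel_topology[OF assms(1,2)]
    by (auto simp: openin_pullback_topology)
  then show ?thesis
    using topological_tendstoD[OF assms(4)] assms(3) by auto
qed

lemma not_openin_sel_topology_if_limit_from_outside:
  fixes g :: "real \<Rightarrow> 'a::linorder_topology"
  assumes "inj g" "p \<in> U" "\<And>n. x n \<notin> U" "(\<lambda>n. g (x n)) \<longlonglongrightarrow> g p"
  shows "\<not> openin (sel_topology (arg_min_on g)) U"
  using eventually_in_openin_sel_topology[OF assms(1) _ assms(2,4)] assms(3)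
  by (metis eventually_sequentially order_refl)

lemma not_closedin_sel_topology_if_limit_from_inside:
  fixes g :: "real \<Rightarrow> 'a::linorder_topology"
  assumes "inj g" "p \<notin> U" "\<And>n. x n \<in> U" "(\<lambda>n. g (x n)) \<longlonglongrightarrow> g p"
  shows "\<not> closedin (sel_topology (arg_min_on g)) U"
  using not_openin_sel_topology_if_limit_from_outside[of g p "- U" x] assms
  by (simp add: closedin_def topspace_sel_topology_arg_min_on Compl_eq_Diff_UNIV)

lemma inj_on_Un_separated:
  assumes "inj_on f A" "inj_on f B" "f ` A \<subseteq> X" "f ` B \<subseteq> Y" "X \<inter> Y = {}"
  shows "inj_on f (A \<union> B)"
  using assms unfolding inj_on_Un by blast

lemma exists_inj_with_crossing_limits:
  fixes a b :: "nat \<Rightarrow> real"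
  assumes "inj a" "inj b" "range a \<inter> range b = {}"
  shows "\<exists>g :: real \<Rightarrow> real. inj g \<and> (\<lambda>n. g (a n)) \<longlonglongrightarrow> g (b 0)
           \<and> (\<lambda>n. g (b (Suc n))) \<longlonglongrightarrow> g (a 0)"
proof -
  txt \<open>\<open>g (a n)\<close> increases to \<open>g (b 0) = 1\<close>, \<open>g (b (Suc n))\<close> increases to
    \<open>g (a 0) = 0\<close>, and all remaining points are sent injectively below \<open>-1\<close>.\<close>
  define ga where "ga n = 1 - inverse (real (Suc n))" for n
  define gb where "gb n = (if n = 0 then 1 else - inverse (real (Suc n)))" for n
  define g where "g x = (if x \<in> range a then ga (inv a x)
      else if x \<in> range b then gb (inv b x) else - 1 - exp x)" for x
  have "inj ga"
    by (rule injI) (auto simp: ga_def simp del: of_nat_Suc dest: arg_cong[of _ _ inverse])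
  have "inj gb"
    by (rule injI) (auto simp: gb_def split: if_splits simp del: of_nat_Suc
        dest: arg_cong[of _ _ inverse])
  have range_ga: "range ga \<subseteq> {0..<1}"
    by (auto simp: ga_def inverse_le_1_iff)
  have range_gb: "range gb \<subseteq> insert 1 {- 1/2..<0}"
    by (auto simp: gb_def inverse_eq_divide field_simps)
  have g_a: "g (a n) = ga n" for n
    using assms(1) by (simp add: g_def)
  have g_b: "g (b n) = gb n" for n
    using assms(2,3) by (auto simp: g_def)
  have inj_a: "inj_on g (range a)"
    using \<open>inj ga\<close> by (auto intro!: inj_onI simp: g_a dest: injD)
  have inj_b: "inj_on g (range b)"
    using \<open>inj gb\<close> by (auto intro!: inj_onI simp: g_b dest: injD)
  have inj_rest: "inj_on g (- (range a \<union> range b))"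
    by (auto intro!: inj_onI simp: g_def)
  have img_a: "g ` range a \<subseteq> {0..<1}"
    using range_ga by (auto simp: g_a)
  have img_b: "g ` range b \<subseteq> insert 1 {- 1/2..<0}"
    using range_gb by (auto simp: g_b)
  have img_rest: "g ` (- (range a \<union> range b)) \<subseteq> {..< -1}"
    by (auto simp: g_def)
  have "inj_on g (range b \<union> - (range a \<union> range b))"
    by (rule inj_on_Un_separated[OF inj_b inj_rest img_b img_rest]) auto
  moreover have "g ` (range b \<union> - (range a \<union> range b)) \<subseteq> insert 1 {- 1/2..<0} \<union> {..< -1}"
    unfolding image_Un by (rule Un_mono[OF img_b img_rest])
  ultimately have "inj_on g (range a \<union> (range b \<union> - (range a \<union> range b)))"
    by (rule inj_on_Un_separated[OF inj_a _ img_a]) auto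
  moreover have "range a \<union> (range b \<union> - (range a \<union> range b)) = UNIV"
    by blast
  ultimately have "inj g"
    by (simp only:)
  moreover have "(\<lambda>n. g (a n)) \<longlonglongrightarrow> g (b 0)"
  proof -
    have "(\<lambda>n. g (a n)) = (\<lambda>n. 1 + - inverse (real (Suc n)))"
      by (simp add: g_a ga_def del: of_nat_Suc)
    moreover have "g (b 0) = 1"
      by (simp add: g_b gb_def)
    ultimately show ?thesis
      using LIMSEQ_inverse_real_of_nat_add_minus[of 1] by (simp only:)
  qed
  moreover have "(\<lambda>n. g (b (Suc n))) \<longlonglongrightarrow> g (a 0)"
  proof -
    have "(\<lambda>n. g (b (Suc n))) = (\<lambda>n. - inverse (real (Suc (Suc n))))"
      by (simp add: g_b gb_def del: of_nat_Suc)
    moreover have "g (a 0) = - 0"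
      by (simp add: g_a ga_def)
    ultimately show ?thesis
      using tendsto_minus[OF LIMSEQ_inverse_real_of_nat, THEN LIMSEQ_Suc] by (simp only:)
  qed
  ultimately show ?thesis
    by blast
qed

theorem theorem3p15:
  fixes C :: "real set"
  assumes "infinite C"
    and "(UNIV - C) \<approx> (UNIV :: real set)"
  shows "\<exists>f. two_point_selection f \<and>
           \<not> openin (sel_topology f) C \<and> \<not> closedin (sel_topology f) C"
proof -
  obtain a :: "nat \<Rightarrow> real" where "inj a" "range a \<subseteq> C"
    using infinite_countable_subset[OF assms(1)] by blast
  have "infinite (UNIV - C)"
    using assms(2) eqpoll_finite_iff infinite_UNIV_char_0 by blast
  then obtain b :: "nat \<Rightarrow> real" where "inj b" "range b \<subseteq> UNIV - C"
    using infinite_countable_subset by blast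
  then obtain g :: "real \<Rightarrow> real" where g: "inj g"
    "(\<lambda>n. g (a n)) \<longlonglongrightarrow> g (b 0)" "(\<lambda>n. g (b (Suc n))) \<longlonglongrightarrow> g (a 0)"
    using exists_inj_with_crossing_limits[OF \<open>inj a\<close> \<open>inj b\<close>] \<open>range a \<subseteq> C\<close> by blast
  have "\<not> openin (sel_topology (arg_min_on g)) C"
    using not_openin_sel_topology_if_limit_from_outside[OF g(1) _ _ g(3)]
      \<open>range a \<subseteq> C\<close> \<open>range b \<subseteq> UNIV - C\<close> by blast
  moreover have "\<not> closedin (sel_topology (arg_min_on g)) C"
    using not_closedin_sel_topology_if_limit_from_inside[OF g(1) _ _ g(2)]
      \<open>range a \<subseteq> C\<close> \<open>range b \<subseteq> UNIV - C\<close> by blast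
  ultimately show ?thesis
    using two_point_selection_arg_min_on[OF g(1)] by blast
qed

end
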